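(* Let $G$ be a non-trivial finite abelian group, $H$ a subgroup of $G$, and let $f$ be an automorphism of $\mathcal{P}_{0}(G)$ with trivial pullback. Then: (1) $f(H)=H$, and $f$ restricts to an automorphism of $\mathcal{P}_{0}(H)$ with trivial pullback. (2) There is an isomorphism of monoids $\mathcal{P}_{0,H}(G)\simeq \mathcal{P}_{0}(G/H)$. Moreover, $f$ restricts to an automorphism of $\mathcal{P}_{0,H}(G)$. (3) For every nonzero $a\in G$, we have $f(G\setminus\{a\})=G\setminus\{b\}$ for some $b\in G$. Moreover, if $\operatorname{ord}(a)\geq 3$, then $f(G\setminus\{a\})=G\setminus\{a\}$.
   Context: For an additively written finite abelian group $G$, $\mathcal{P}_{0}(G)$ is the monoid of all subsets of $G$ containing $0$, with setwise addition $X+Y=\{x+y:x\in X,y\in Y\}$ and identity $\{0\}$. Every automorphism $f$ of $\mathcal{P}_0(G)$ maps $2$-element sets to $2$-element sets; the pullback of $f$ is the map $g:G\to G$ with $g(0)=0$ and $f(\{0,a\})=\{0,g(a)\}$ for nonzero $a$; $f$ has trivial pullback if $g$ is the identity, i.e. $f(\{0,a\})=\{0,a\}$ for all $a\in G$. For a subgroup $H$ of $G$, $\mathcal{P}_{0,H}(G)=H+\mathcal{P}_0(G)=\{H+X : X\in\mathcal{P}_0(G)\}$, the set of elements of $\mathcal{P}_0(G)$ divisible by $H$; it is a monoid under setwise addition with identity $H$. *)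

theory Defs
  imports Main
begin

text \<open>The ambient finite abelian group G is the universe of a type
  'a :: {finite, ab_group_add}.\<close>

definition sadd :: "'a::ab_group_add set \<Rightarrow> 'a set \<Rightarrow> 'a set" where
  "sadd X Y = {x + y | x y. x \<in> X \<and> y \<in> Y}"

definition P0 :: "'a::ab_group_add set set" where
  "P0 = {X. 0 \<in> X}"

definition P0_on :: "'a::ab_group_add set \<Rightarrow> 'a set set" where
  "P0_on H = {X. 0 \<in> X \<and> X \<subseteq> H}"

definition is_subgroup :: "'a::ab_group_add set \<Rightarrow> bool" where
  "is_subgroup H \<longleftrightarrow> 0 \<in> H \<and> (\<forall>x\<in>H. \<forall>y\<in>H. x + y \<in> H) \<and> (\<forall>x\<in>H. - x \<in> H)"

definition P0H :: "'a::ab_group_add set \<Rightarrow> 'a set set" where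
  "P0H H = {sadd H X | X. X \<in> P0}"

text \<open>Cosets a + H; the quotient group G/H is the set of cosets, with setwise
  addition of cosets as group operation and H as zero.\<close>
definition cosets :: "'a::ab_group_add set \<Rightarrow> 'a set set" where
  "cosets H = {sadd {a} H | a. True}"

definition qsadd :: "'a::ab_group_add set set \<Rightarrow> 'a set set \<Rightarrow> 'a set set" where
  "qsadd S T = {sadd c d | c d. c \<in> S \<and> d \<in> T}"

definition P0_quot :: "'a::ab_group_add set \<Rightarrow> 'a set set set" where
  "P0_quot H = {S. S \<subseteq> cosets H \<and> H \<in> S}"

definition monoid_aut :: "'b set \<Rightarrow> 'b \<Rightarrow> ('b \<Rightarrow> 'b \<Rightarrow> 'b) \<Rightarrow> ('b \<Rightarrow> 'b) \<Rightarrow> bool" where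
  "monoid_aut M e op f \<longleftrightarrow> bij_betw f M M \<and> f e = e \<and>
     (\<forall>X\<in>M. \<forall>Y\<in>M. f (op X Y) = op (f X) (f Y))"

definition monoid_iso :: "'b set \<Rightarrow> 'b \<Rightarrow> ('b \<Rightarrow> 'b \<Rightarrow> 'b) \<Rightarrow>
    'c set \<Rightarrow> 'c \<Rightarrow> ('c \<Rightarrow> 'c \<Rightarrow> 'c) \<Rightarrow> ('b \<Rightarrow> 'c) \<Rightarrow> bool" where
  "monoid_iso M e op M' e' op' \<phi> \<longleftrightarrow> bij_betw \<phi> M M' \<and> \<phi> e = e' \<and>
     (\<forall>X\<in>M. \<forall>Y\<in>M. \<phi> (op X Y) = op' (\<phi> X) (\<phi> Y))"

definition trivial_pullback :: "'a::ab_group_add set \<Rightarrow> ('a set \<Rightarrow> 'a set) \<Rightarrow> bool" where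
  "trivial_pullback A f \<longleftrightarrow> (\<forall>a\<in>A. f {0, a} = {0, a})"

primrec natmul :: "nat \<Rightarrow> 'a::ab_group_add \<Rightarrow> 'a" where
  "natmul 0 a = 0"
| "natmul (Suc n) a = a + natmul n a"

definition add_ord :: "'a::ab_group_add \<Rightarrow> nat" where
  "add_ord a = (LEAST n. 0 < n \<and> natmul n a = 0)"

end

theory Submission
  imports Defs
begin

(* Every subgroup H is the set of subset sums of H, i.e. the sum of the two-element sets {0, h}
   for h in H; as f fixes each {0, h}, it fixes H. Inside P_0(G), P_0(H) consists of the X with
   X + H = H and P_{0,H}(G) of the X with H + X = X, so f maps both into themselves, and
   X \<mapsto> {x + H | x \<in> X} identifies P_{0,H}(G) with P_0(G/H).
   For part (3): the proper sets Y with {0, c} + Y = G for all c \<noteq> 0 are the complements of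
   points, and G - {a} is such a set, hence so is its image G - {b}. If b \<noteq> a and 2a \<noteq> 0, then
   G - {b} = {0, a} + (G - {b, b - a}); pulling back along f gives {0, a} + V = G - {a} with
   0 \<in> V, which is absurd since then a lies on the left. *)

lemma mem_sadd: "z \<in> sadd X Y \<longleftrightarrow> (\<exists>x\<in>X. \<exists>y\<in>Y. z = x + y)"
  unfolding sadd_def by blast

lemma sadd_assoc: "sadd (sadd X Y) Z = sadd X (sadd Y Z)"
  unfolding sadd_def by (auto, metis add.assoc, metis add.assoc)

lemma sadd_commute: "sadd X Y = sadd Y X"
  unfolding sadd_def by (auto, (metis add.commute)+)

lemma sadd_left_commute: "sadd X (sadd Y Z) = sadd Y (sadd X Z)"
  by (metis sadd_assoc sadd_commute)

lemmas sadd_ac = sadd_assoc sadd_commute sadd_left_commute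

lemma sadd_singletons [simp]: "sadd {x} {y} = {x + y}"
  unfolding sadd_def by simp

lemma sadd_zero_left [simp]: "sadd {0} X = X"
  unfolding sadd_def by auto

lemma sadd_in_P0: "X \<in> P0 \<Longrightarrow> Y \<in> P0 \<Longrightarrow> sadd X Y \<in> P0"
  unfolding P0_def sadd_def by force

lemma zero_pair_in_P0: "{0, a} \<in> P0"
  by (simp add: P0_def)

lemma sadd_zero_pair: "sadd {0, x} Y = Y \<union> (+) x ` Y"
  unfolding sadd_def by force

lemma subgroup_zero: "is_subgroup H \<Longrightarrow> 0 \<in> H"
  and subgroup_add: "is_subgroup H \<Longrightarrow> x \<in> H \<Longrightarrow> y \<in> H \<Longrightarrow> x + y \<in> H"
  and subgroup_minus: "is_subgroup H \<Longrightarrow> x \<in> H \<Longrightarrow> - x \<in> H"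
  unfolding is_subgroup_def by blast+

lemma subgroup_diff: "is_subgroup H \<Longrightarrow> x \<in> H \<Longrightarrow> y \<in> H \<Longrightarrow> x - y \<in> H"
  using subgroup_add subgroup_minus by (metis diff_conv_add_uminus)

lemma subgroup_sum:
  assumes "is_subgroup H" "T \<subseteq> H"
  shows "\<Sum>T \<in> H"
proof (cases "finite T")
  case True
  then show ?thesis using \<open>T \<subseteq> H\<close>
    by (induction T rule: finite_induct) (simp_all add: assms(1) subgroup_zero subgroup_add)
qed (simp add: assms(1) subgroup_zero)

lemma subgroup_sadd_self: "is_subgroup H \<Longrightarrow> sadd H H = H"
  unfolding sadd_def by (force intro: subgroup_add dest: subgroup_zero)

definition subset_sums :: "'a::ab_group_add set \<Rightarrow> 'a set" where
  "subset_sums S = Sum ` Pow S"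

lemma subset_sums_empty [simp]: "subset_sums {} = {0}"
  unfolding subset_sums_def by simp

lemma subset_sums_insert:
  assumes "finite S" "x \<notin> S"
  shows "subset_sums (insert x S) = sadd {0, x} (subset_sums S)"
proof -
  have "\<Sum>(insert x T) = x + \<Sum>T" if "T \<in> Pow S" for T
    using that assms finite_subset by (subst sum.insert) auto
  then show ?thesis
    unfolding subset_sums_def Pow_insert sadd_zero_pair image_Un image_image
    by (auto intro!: image_cong)
qed

lemma subset_sums_subgroup: "is_subgroup H \<Longrightarrow> subset_sums H = H"
  unfolding subset_sums_def
  by (auto intro: subgroup_sum image_eqI[where x="{h}" for h])

lemma mem_coset: "y \<in> sadd {x} H \<longleftrightarrow> y - x \<in> H"
  unfolding sadd_def by (auto intro: exI[where x="y - x"])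

lemma coset_eqI:
  assumes "is_subgroup H" "y \<in> sadd {x} H"
  shows "sadd {y} H = sadd {x} H"
proof -
  have "z - y \<in> H \<longleftrightarrow> z - x \<in> H" for z
    using assms subgroup_add[of H "z - y" "y - x"] subgroup_diff[of H "z - x" "y - x"]
    unfolding mem_coset by auto
  then show ?thesis
    unfolding set_eq_iff mem_coset by blast
qed

lemma self_mem_coset: "is_subgroup H \<Longrightarrow> x \<in> sadd {x} H"
  by (simp add: mem_coset subgroup_zero)

lemma sadd_cosets:
  assumes "is_subgroup H"
  shows "sadd (sadd {x} H) (sadd {y} H) = sadd {x + y} H"
proof -
  have "sadd (sadd {x} H) (sadd {y} H) = sadd (sadd {x} {y}) (sadd H H)"
    by (simp only: sadd_ac)
  then show ?thesis
    by (simp add: subgroup_sadd_self[OF assms])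
qed

definition cosets_of :: "'a::ab_group_add set \<Rightarrow> 'a set \<Rightarrow> 'a set set" where
  "cosets_of H X = (\<lambda>x. sadd {x} H) ` X"

lemma Union_cosets_of: "\<Union> (cosets_of H X) = sadd X H"
  unfolding cosets_of_def sadd_def by blast

lemma cosets_of_Union:
  assumes "is_subgroup H" "S \<subseteq> cosets H"
  shows "cosets_of H (\<Union> S) = S"
proof -
  have coset_of_member: "sadd {x} H = c" if "c \<in> S" "x \<in> c" for c x
  proof -
    obtain a where "c = sadd {a} H"
      using \<open>c \<in> S\<close> assms(2) unfolding cosets_def by blast
    then show ?thesis
      using coset_eqI[OF assms(1)] \<open>x \<in> c\<close> by simp
  qed
  have "S \<subseteq> cosets_of H (\<Union> S)"
  proof
    fix c assume "c \<in> S"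
    then obtain x where "x \<in> c"
      using assms(2) self_mem_coset[OF assms(1)] unfolding cosets_def by blast
    then show "c \<in> cosets_of H (\<Union> S)"
      unfolding cosets_of_def using \<open>c \<in> S\<close> coset_of_member by blast
  qed
  moreover have "cosets_of H (\<Union> S) \<subseteq> S"
    unfolding cosets_of_def using coset_of_member by blast
  ultimately show ?thesis by blast
qed

lemma cosets_of_sadd:
  assumes "is_subgroup H"
  shows "cosets_of H (sadd X Y) = qsadd (cosets_of H X) (cosets_of H Y)"
proof -
  have "cosets_of H (sadd X Y) = {sadd {x + y} H | x y. x \<in> X \<and> y \<in> Y}"
    unfolding cosets_of_def sadd_def[of X Y] by blast
  also have "\<dots> = {sadd (sadd {x} H) (sadd {y} H) | x y. x \<in> X \<and> y \<in> Y}"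
    by (simp add: sadd_cosets[OF assms])
  also have "\<dots> = qsadd (cosets_of H X) (cosets_of H Y)"
    unfolding cosets_of_def qsadd_def by blast
  finally show ?thesis .
qed

lemma P0_on_subgroup_eq:
  assumes "is_subgroup H"
  shows "P0_on H = {X \<in> P0. sadd X H = H}"
proof -
  have "sadd X H = H" if "0 \<in> X" "X \<subseteq> H" for X
  proof
    show "sadd X H \<subseteq> H"
      using that subgroup_add[OF assms] by (auto simp: mem_sadd subset_iff)
    show "H \<subseteq> sadd X H"
      using that unfolding mem_sadd subset_iff by (metis add_0)
  qed
  moreover have "X \<subseteq> H" if "sadd X H = H" for X
    using that subgroup_zero[OF assms] unfolding mem_sadd set_eq_iff subset_iff
    by (metis add.right_neutral)
  ultimately show ?thesis
    unfolding P0_on_def P0_def by blast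
qed

lemma P0H_subgroup_eq:
  assumes "is_subgroup H"
  shows "P0H H = {X \<in> P0. sadd H X = X}"
proof -
  have "H \<in> P0"
    using subgroup_zero[OF assms] unfolding P0_def by simp
  moreover have "sadd H (sadd H Y) = sadd H Y" for Y
    by (simp add: subgroup_sadd_self[OF assms] flip: sadd_assoc)
  ultimately show ?thesis
    unfolding P0H_def by (auto intro: sadd_in_P0)
qed

lemma cosets_of_subgroup:
  assumes "is_subgroup H"
  shows "cosets_of H H = {H}"
proof -
  have "sadd {h} H = H" if "h \<in> H" for h
    using coset_eqI[OF assms, of h 0] that by simp
  then show ?thesis
    unfolding cosets_of_def using subgroup_zero[OF assms] by blast
qed

lemma monoid_iso_cosets_of:
  assumes "is_subgroup H"
  shows "monoid_iso (P0H H) H sadd (P0_quot H) {H} qsadd (cosets_of H)"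
proof -
  have Union_inverse: "\<Union> (cosets_of H X) = X" if "X \<in> P0H H" for X
    using that by (simp add: P0H_subgroup_eq[OF assms] Union_cosets_of sadd_commute)
  have inverse_Union: "cosets_of H (\<Union> S) = S" if "S \<in> P0_quot H" for S
    using that cosets_of_Union[OF assms] unfolding P0_quot_def by blast
  have "cosets_of H X \<in> P0_quot H" if "X \<in> P0H H" for X
  proof -
    have "H \<in> cosets_of H X"
      using that unfolding P0H_subgroup_eq[OF assms] P0_def cosets_of_def
      by (auto intro: image_eqI[where x=0])
    then show ?thesis
      unfolding P0_quot_def cosets_of_def cosets_def by blast
  qed
  moreover have "\<Union> S \<in> P0H H" if "S \<in> P0_quot H" for S
  proof -
    have "0 \<in> \<Union> S"
      using that subgroup_zero[OF assms] unfolding P0_quot_def by blast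
    moreover have "sadd H (\<Union> S) = \<Union> S"
      using Union_cosets_of[of H "\<Union> S"] inverse_Union[OF that] by (simp add: sadd_commute)
    ultimately show ?thesis
      unfolding P0H_subgroup_eq[OF assms] P0_def by blast
  qed
  ultimately have "bij_betw (cosets_of H) (P0H H) (P0_quot H)"
    using Union_inverse inverse_Union by (intro bij_betw_byWitness[where f'=Union]) auto
  then show ?thesis
    unfolding monoid_iso_def
    using cosets_of_subgroup[OF assms] cosets_of_sadd[OF assms] by blast
qed

lemma sadd_pair_complement_point:
  assumes "c \<noteq> 0"
  shows "sadd {0, c} (UNIV - {a}) = UNIV"
  using assms unfolding sadd_zero_pair by (auto intro: image_eqI[where x="a - c"])

lemma complement_pointI:
  assumes "Y \<noteq> UNIV" and covers: "\<And>c. c \<noteq> 0 \<Longrightarrow> sadd {0, c} Y = UNIV"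
  shows "\<exists>b. Y = UNIV - {b}"
proof -
  obtain b where "b \<notin> Y"
    using assms(1) by blast
  have "g \<in> Y" if "g \<noteq> b" for g
  proof -
    have "b \<in> sadd {0, b - g} Y"
      using covers[of "b - g"] that by simp
    then show ?thesis
      using \<open>b \<notin> Y\<close> unfolding sadd_zero_pair by auto
  qed
  then show ?thesis
    using \<open>b \<notin> Y\<close> by blast
qed

lemma sadd_pair_complement_two_points:
  assumes "a + a \<noteq> 0"
  shows "sadd {0, a} (UNIV - {b, b - a}) = UNIV - {b}"
proof -
  have "b - a - a \<notin> {b, b - a}"
    using assms by (auto simp: algebra_simps)
  then have "b - a \<in> (+) a ` (UNIV - {b, b - a})"
    by (intro image_eqI[where x="b - a - a"]) simp_all
  then show ?thesis
    unfolding sadd_zero_pair by (auto simp: algebra_simps)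
qed

lemma add_ord_ge_3_imp_double_nonzero:
  assumes "add_ord a \<ge> 3"
  shows "a + a \<noteq> 0"
proof
  assume "a + a = 0"
  then have "add_ord a \<le> 2"
    unfolding add_ord_def by (intro Least_le) (simp add: numeral_2_eq_2)
  then show False
    using assms by simp
qed

lemma monoid_aut_restrict:
  assumes "monoid_aut M e op f" "finite N" "N \<subseteq> M" "f ` N \<subseteq> N" "f e' = e'"
  shows "monoid_aut N e' op f"
proof -
  have "inj_on f N"
    using assms(1,3) inj_on_subset unfolding monoid_aut_def bij_betw_def by blast
  then have "bij_betw f N N"
    using endo_inj_surj[OF assms(2,4)] unfolding bij_betw_def by blast
  then show ?thesis
    using assms(1,3,5) unfolding monoid_aut_def by blast
qed

locale P0_aut_trivial_pullback =
  fixes f :: "'a::{finite, ab_group_add} set \<Rightarrow> 'a set"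
  assumes aut: "monoid_aut P0 {0} sadd f"
    and triv: "trivial_pullback UNIV f"
begin

lemma f_zero: "f {0} = {0}"
  and f_sadd: "X \<in> P0 \<Longrightarrow> Y \<in> P0 \<Longrightarrow> f (sadd X Y) = sadd (f X) (f Y)"
  and bij_f: "bij_betw f P0 P0"
  using aut unfolding monoid_aut_def by simp_all

lemma f_in_P0: "X \<in> P0 \<Longrightarrow> f X \<in> P0"
  by (rule bij_betw_apply[OF bij_f])

lemma f_eq_iff: "X \<in> P0 \<Longrightarrow> Y \<in> P0 \<Longrightarrow> f X = f Y \<longleftrightarrow> X = Y"
  using bij_betw_imp_inj_on[OF bij_f] by (rule inj_on_eq_iff)

lemma f_surj: "Y \<in> P0 \<Longrightarrow> \<exists>X\<in>P0. f X = Y"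
  by (metis bij_betw_imp_surj_on[OF bij_f] imageE)

lemma f_zero_pair: "f {0, a} = {0, a}"
  using triv unfolding trivial_pullback_def by blast

lemma f_sadd_zero_pair: "X \<in> P0 \<Longrightarrow> f (sadd {0, a} X) = sadd {0, a} (f X)"
  by (simp add: f_sadd zero_pair_in_P0 f_zero_pair)

lemma f_subset_sums: "f (subset_sums S) = subset_sums S"
proof -
  have "finite S"
    by simp
  then show ?thesis
  proof (induction S rule: finite_induct)
    case empty
    then show ?case
      by (simp add: f_zero)
  next
    case (insert x S)
    have "subset_sums S \<in> P0"
      unfolding subset_sums_def P0_def by (auto intro: image_eqI[where x="{}"])
    then show ?case
      using insert by (simp add: subset_sums_insert f_sadd_zero_pair)
  qed
qed

lemma f_subgroup: "is_subgroup H \<Longrightarrow> f H = H"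
  using f_subset_sums subset_sums_subgroup by metis

lemma monoid_aut_P0_on:
  assumes "is_subgroup H"
  shows "monoid_aut (P0_on H) {0} sadd f"
proof (rule monoid_aut_restrict[OF aut])
  have "H \<in> P0"
    using subgroup_zero[OF assms] by (simp add: P0_def)
  then have "sadd (f X) H = H" if "X \<in> P0" "sadd X H = H" for X
    using f_sadd[OF that(1)] that(2) f_subgroup[OF assms] by metis
  then show "f ` P0_on H \<subseteq> P0_on H"
    unfolding P0_on_subgroup_eq[OF assms] using f_in_P0 by blast
qed (auto simp: P0_on_subgroup_eq[OF assms] f_zero)

lemma monoid_aut_P0H:
  assumes "is_subgroup H"
  shows "monoid_aut (P0H H) H sadd f"
proof (rule monoid_aut_restrict[OF aut])
  have "H \<in> P0"
    using subgroup_zero[OF assms] by (simp add: P0_def)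
  then have "sadd H (f X) = f X" if "X \<in> P0" "sadd H X = X" for X
    using f_sadd[OF _ that(1)] that(2) f_subgroup[OF assms] by metis
  then show "f ` P0H H \<subseteq> P0H H"
    unfolding P0H_subgroup_eq[OF assms] using f_in_P0 by blast
qed (auto simp: P0H_subgroup_eq[OF assms] f_subgroup[OF assms])

lemma f_complement_point:
  assumes "a \<noteq> 0"
  shows "\<exists>b. f (UNIV - {a}) = UNIV - {b}"
proof (rule complement_pointI)
  have in_P0: "UNIV - {a} \<in> P0" "UNIV \<in> P0"
    using assms by (simp_all add: P0_def)
  have f_UNIV: "f UNIV = UNIV"
    by (rule f_subgroup) (simp add: is_subgroup_def)
  show "f (UNIV - {a}) \<noteq> UNIV"
    using f_eq_iff[OF in_P0] f_UNIV by auto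
  show "sadd {0, c} (f (UNIV - {a})) = UNIV" if "c \<noteq> 0" for c
    using f_sadd_zero_pair[OF in_P0(1), of c] sadd_pair_complement_point[OF that] f_UNIV
    by simp
qed

lemma f_complement_point_fixed:
  assumes "a + a \<noteq> 0"
  shows "f (UNIV - {a}) = UNIV - {a}"
proof (rule ccontr)
  have "a \<noteq> 0"
    using assms by auto
  then obtain b where b: "f (UNIV - {a}) = UNIV - {b}"
    using f_complement_point by blast
  have in_P0: "UNIV - {a} \<in> P0"
    using \<open>a \<noteq> 0\<close> by (simp add: P0_def)
  assume "f (UNIV - {a}) \<noteq> UNIV - {a}"
  then have "b \<noteq> a"
    using b by auto
  moreover have "b \<noteq> 0"
    using f_in_P0[OF in_P0] b by (auto simp: P0_def)
  ultimately have "UNIV - {b, b - a} \<in> P0"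
    by (simp add: P0_def)
  then obtain V where V: "V \<in> P0" "f V = UNIV - {b, b - a}"
    using f_surj by blast
  have "f (sadd {0, a} V) = f (UNIV - {a})"
    using f_sadd_zero_pair[OF V(1)] V(2) sadd_pair_complement_two_points[OF assms] b by simp
  then have "sadd {0, a} V = UNIV - {a}"
    using f_eq_iff[OF sadd_in_P0[OF zero_pair_in_P0 V(1)] in_P0] by blast
  moreover have "a \<in> sadd {0, a} V"
    using V(1) unfolding P0_def sadd_zero_pair by (auto intro: image_eqI[where x=0])
  ultimately show False
    by blast
qed

end

theorem lemma3p1:
  fixes f :: "'a::{finite, ab_group_add} set \<Rightarrow> 'a set"
    and H :: "'a set"
  assumes nontriv: "card (UNIV :: 'a set) > 1"
    and sub: "is_subgroup H"
    and aut: "monoid_aut P0 {0} sadd f"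
    and triv: "trivial_pullback UNIV f"
  shows "(f H = H \<and> monoid_aut (P0_on H) {0} sadd f \<and> trivial_pullback H f)
    \<and> ((\<exists>\<phi>. monoid_iso (P0H H) H sadd (P0_quot H) {H} qsadd \<phi>)
        \<and> monoid_aut (P0H H) H sadd f)
    \<and> (\<forall>a. a \<noteq> 0 \<longrightarrow>
          (\<exists>b. f (UNIV - {a}) = UNIV - {b})
          \<and> (add_ord a \<ge> 3 \<longrightarrow> f (UNIV - {a}) = UNIV - {a}))"
proof -
  interpret P0_aut_trivial_pullback f
    using aut triv by unfold_locales
  have "trivial_pullback H f"
    using triv unfolding trivial_pullback_def by blast
  then show ?thesis
    using f_subgroup[OF sub] monoid_aut_P0_on[OF sub] monoid_iso_cosets_of[OF sub]
      monoid_aut_P0H[OF sub] f_complement_point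
      f_complement_point_fixed[OF add_ord_ge_3_imp_double_nonzero]
    by blast
qed

end
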